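(* Assume $J$ satisfies (J1), (J2), (J5) and (JP), and $h\equiv0$. Let $u$ be a minimizer for $H$ in $Q_\ell(q)$ for some $q\in\mathbb Z^d$, $\ell\in\mathbb N$. If $q\in\partial u$, then $$I_{Q_\ell(q),Q_\ell(q)}(u)\ge c_\star\,\ell^{d-s},$$ for a constant $c_\star>0$ depending only on $d$, $s$, $\lambda$ and $\Lambda$.
   Context: Fix $d\ge2$, $|x|:=\sum_n|x_n|$, $|x|_\infty:=\max_n|x_n|$. Configurations are maps $u:\mathbb Z^d\to\{-1,1\}$; $\partial u:=\{i: u_i=1\text{ and }\exists j,\ |i-j|=1,\ u_j=-1\}$. $I_{\Gamma,\Omega}(u):=\sum_{i\in\Gamma,j\in\Omega}J_{ij}(1-u_iu_j)$. With $h\equiv0$, for finite $\Gamma$: $H_\Gamma(u):=\sum_{(i,j)\in\mathbb Z^{2d}\setminus(\mathbb Z^d\setminus\Gamma)^2}J_{ij}(1-u_iu_j)$; $u$ is a minimizer for $H$ in $\Gamma$ if $H_\Gamma(u)\le H_\Gamma(v)$ for all $v$ agreeing with $u$ outside $\Gamma$. $Q_\ell(q):=\{i\in\mathbb Z^d:|i-q|_\infty\le\ell\}$. Conditions on $J:\mathbb Z^d\times\mathbb Z^d\to[0,\infty)$: (J1) $J_{ij}=J_{ji}$; (J2) $J_{ii}=0$; (J5) $J_{ij}=J_{i'j'}$ whenever $i-i'=j-j'\in\tau\mathbb Z^d$, for some $\tau\in\mathbb N$; (JP) $\lambda|i-j|^{-d-s}\le J_{ij}\le\Lambda|i-j|^{-d-s}$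 for all $i\ne j$, for some $s\in(0,1)$, $\Lambda\ge\lambda>0$. *)

theory Defs
  imports "HOL-Analysis.Analysis"
begin

text \<open>The lattice Z^d is represented by functions nat => int vanishing from index d on.\<close>

definition lat :: "nat \<Rightarrow> (nat \<Rightarrow> int) set" where
  "lat d = {x. \<forall>n\<ge>d. x n = 0}"

definition norm1 :: "nat \<Rightarrow> (nat \<Rightarrow> int) \<Rightarrow> int" where
  "norm1 d x = (\<Sum>n<d. \<bar>x n\<bar>)"

definition cube :: "nat \<Rightarrow> nat \<Rightarrow> (nat \<Rightarrow> int) \<Rightarrow> (nat \<Rightarrow> int) set" where
  "cube d l q = {i \<in> lat d. \<forall>n<d. \<bar>i n - q n\<bar> \<le> int l}"

definition config :: "nat \<Rightarrow> ((nat \<Rightarrow> int) \<Rightarrow> real) \<Rightarrow> bool" where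
  "config d u = (\<forall>i\<in>lat d. u i = -1 \<or> u i = 1)"

definition bdry :: "nat \<Rightarrow> ((nat \<Rightarrow> int) \<Rightarrow> real) \<Rightarrow> (nat \<Rightarrow> int) set" where
  "bdry d u = {i \<in> lat d. u i = 1 \<and> (\<exists>j\<in>lat d. norm1 d (i - j) = 1 \<and> u j = -1)}"

definition Iint :: "((nat \<Rightarrow> int) \<Rightarrow> (nat \<Rightarrow> int) \<Rightarrow> real) \<Rightarrow> (nat \<Rightarrow> int) set
    \<Rightarrow> (nat \<Rightarrow> int) set \<Rightarrow> ((nat \<Rightarrow> int) \<Rightarrow> real) \<Rightarrow> real" where
  "Iint J \<Gamma> \<Omega> u = (\<Sum>i\<in>\<Gamma>. \<Sum>j\<in>\<Omega>. J i j * (1 - u i * u j))"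

text \<open>Energy with h = 0: sum over pairs of lattice points not both outside Gamma.\<close>
definition Hen :: "nat \<Rightarrow> ((nat \<Rightarrow> int) \<Rightarrow> (nat \<Rightarrow> int) \<Rightarrow> real) \<Rightarrow> (nat \<Rightarrow> int) set
    \<Rightarrow> ((nat \<Rightarrow> int) \<Rightarrow> real) \<Rightarrow> real" where
  "Hen d J \<Gamma> u = infsum (\<lambda>(i,j). J i j * (1 - u i * u j))
      ((lat d \<times> lat d) - ((lat d - \<Gamma>) \<times> (lat d - \<Gamma>)))"

definition minimizer :: "nat \<Rightarrow> ((nat \<Rightarrow> int) \<Rightarrow> (nat \<Rightarrow> int) \<Rightarrow> real) \<Rightarrow> (nat \<Rightarrow> int) set
    \<Rightarrow> ((nat \<Rightarrow> int) \<Rightarrow> real) \<Rightarrow> bool" where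
  "minimizer d J \<Gamma> u = (config d u \<and>
     (\<forall>v. config d v \<and> (\<forall>i\<in>lat d - \<Gamma>. v i = u i) \<longrightarrow> Hen d J \<Gamma> u \<le> Hen d J \<Gamma> v))"

definition J_nonneg :: "nat \<Rightarrow> ((nat \<Rightarrow> int) \<Rightarrow> (nat \<Rightarrow> int) \<Rightarrow> real) \<Rightarrow> bool" where
  "J_nonneg d J = (\<forall>i\<in>lat d. \<forall>j\<in>lat d. J i j \<ge> 0)"

definition J1 :: "nat \<Rightarrow> ((nat \<Rightarrow> int) \<Rightarrow> (nat \<Rightarrow> int) \<Rightarrow> real) \<Rightarrow> bool" where
  "J1 d J = (\<forall>i\<in>lat d. \<forall>j\<in>lat d. J i j = J j i)"

definition J2 :: "nat \<Rightarrow> ((nat \<Rightarrow> int) \<Rightarrow> (nat \<Rightarrow> int) \<Rightarrow> real) \<Rightarrow> bool" where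
  "J2 d J = (\<forall>i\<in>lat d. J i i = 0)"

definition J5 :: "nat \<Rightarrow> ((nat \<Rightarrow> int) \<Rightarrow> (nat \<Rightarrow> int) \<Rightarrow> real) \<Rightarrow> bool" where
  "J5 d J = (\<exists>\<tau>::nat. \<tau> \<ge> 1 \<and>
     (\<forall>i\<in>lat d. \<forall>i'\<in>lat d. \<forall>j\<in>lat d. \<forall>j'\<in>lat d.
        i - i' = j - j' \<and> (\<forall>n<d. int \<tau> dvd (i n - i' n)) \<longrightarrow> J i j = J i' j'))"

definition JP :: "nat \<Rightarrow> real \<Rightarrow> real \<Rightarrow> real \<Rightarrow> ((nat \<Rightarrow> int) \<Rightarrow> (nat \<Rightarrow> int) \<Rightarrow> real) \<Rightarrow> bool" where
  "JP d s lam Lam J = (\<forall>i\<in>lat d. \<forall>j\<in>lat d. i \<noteq> j \<longrightarrow>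
     lam * real_of_int (norm1 d (i - j)) powr (- (real d + s)) \<le> J i j \<and>
     J i j \<le> Lam * real_of_int (norm1 d (i - j)) powr (- (real d + s)))"

end

(*
  Write A_r^+ and A_r^- for the sites of spin +1 and -1 in the cube Q_r(q). Flipping A = A_r^\<sigma>
  (r \<le> l) is admissible, so by minimality the bonds from A to its complement are at least half
  aligned; an aligned bond leaving A must leave Q_r. With the fractional isoperimetric inequality
  |A|^(1-s/d) \<lesssim> I(A, A^c) this bounds |A|^(1-s/d) by the interaction of A with the exterior
  of Q_r, which is at most a sum of tails (r - |x - q|_\<infinity> + 1)^(-s) over x \<in> A. Averaging over r \<in> [R, 2R] gives
  R^s |A_R|^(1-s/d) \<lesssim> |A_2R|, and iterating along dyadic radii from |A_1| \<ge> 1 (q is a boundary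
  point, so both phases meet Q_1) yields |A_l^\<pm>| \<gtrsim> l^d. Every pair of opposite spins in Q_l
  interacts with strength \<gtrsim> l^(-d-s), so I(Q_l, Q_l) \<gtrsim> l^(2d) l^(-d-s) = l^(d-s).
*)

theory Submission
  imports Defs "HOL-Library.Log_Nat"
begin

lemma lat_eqI:
  assumes "x \<in> lat d" "y \<in> lat d" "\<And>n. n < d \<Longrightarrow> x n = y n"
  shows "x = y"
proof
  fix n show "x n = y n" using assms by (cases "n < d") (auto simp: lat_def)
qed

lemma cube_subset_lat: "cube d k x \<subseteq> lat d"
  by (auto simp: cube_def)

lemma lat_of_mem_cube: "y \<in> cube d k x \<Longrightarrow> y \<in> lat d"
  by (simp add: cube_def)

lemma cube_mono: "k \<le> k' \<Longrightarrow> cube d k x \<subseteq> cube d k' x"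
  by (force simp: cube_def)

lemma cube_0: "x \<in> lat d \<Longrightarrow> cube d 0 x = {x}"
  by (auto simp: cube_def intro: lat_eqI)

lemma mem_cube_trans: "x \<in> cube d t q \<Longrightarrow> y \<in> cube d k x \<Longrightarrow> y \<in> cube d (t + k) q"
  by (force simp: cube_def)

lemma mem_cube_double: "i \<in> cube d l q \<Longrightarrow> j \<in> cube d l q \<Longrightarrow> j \<in> cube d (2 * l) i"
  by (force simp: cube_def)

lemma bij_betw_cube_PiE:
  "bij_betw (\<lambda>f. restrict f {..<d}) (cube d k x) (PiE {..<d} (\<lambda>n. {x n - int k .. x n + int k}))"
proof (rule bij_betwI')
  fix f g assume "f \<in> cube d k x" "g \<in> cube d k x"
  then show "(restrict f {..<d} = restrict g {..<d}) = (f = g)"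
    by (auto simp: cube_def restrict_def intro!: lat_eqI) (metis lessThan_iff)
next
  fix f assume "f \<in> cube d k x"
  then show "restrict f {..<d} \<in> PiE {..<d} (\<lambda>n. {x n - int k .. x n + int k})"
    by (auto simp: cube_def abs_le_iff)
next
  fix g assume g: "g \<in> PiE {..<d} (\<lambda>n. {x n - int k .. x n + int k})"
  define f where "f n = (if n < d then g n else 0)" for n
  have "g n \<in> {x n - int k .. x n + int k}" if "n < d" for n
    using PiE_mem[OF g] that by simp
  then have "f \<in> cube d k x" by (force simp: cube_def lat_def f_def abs_le_iff)
  moreover have "g = restrict f {..<d}"
    using g by (auto simp: f_def restrict_def PiE_def extensional_def)
  ultimately show "\<exists>f\<in>cube d k x. g = restrict f {..<d}" by blast
qed

lemma card_cube: "card (cube d k x) = (2 * k + 1) ^ d"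
proof -
  have "card (cube d k x) = card (PiE {..<d} (\<lambda>n. {x n - int k .. x n + int k}))"
    by (rule bij_betw_same_card[OF bij_betw_cube_PiE])
  also have "\<dots> = (2 * k + 1) ^ d"
    by (simp add: card_PiE nat_add_distrib nat_mult_distrib)
  finally show ?thesis .
qed

lemma finite_cube: "finite (cube d k x)"
  using bij_betw_finite[OF bij_betw_cube_PiE] by (simp add: finite_PiE)

lemma norm1_nonneg: "0 \<le> norm1 d x"
  by (simp add: norm1_def sum_nonneg)

lemma abs_le_norm1: "n < d \<Longrightarrow> \<bar>x n\<bar> \<le> norm1 d x"
  unfolding norm1_def by (rule member_le_sum) auto

lemma norm1_le_of_mem_cube:
  assumes "y \<in> cube d k x"
  shows "norm1 d (x - y) \<le> int d * int k"
proof -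
  have "norm1 d (x - y) \<le> (\<Sum>n<d. int k)"
    unfolding norm1_def using assms by (intro sum_mono) (auto simp: cube_def abs_minus_commute)
  then show ?thesis by simp
qed

lemma norm1_gt_of_not_mem_cube:
  assumes "y \<in> lat d" "y \<notin> cube d k x"
  shows "int k < norm1 d (x - y)"
proof -
  obtain n where "n < d" "int k < \<bar>y n - x n\<bar>" using assms by (auto simp: cube_def)
  then show ?thesis using abs_le_norm1[of n d "x - y"] by (simp add: abs_minus_commute)
qed

lemma norm1_ge_1: "x \<in> lat d \<Longrightarrow> y \<in> lat d \<Longrightarrow> x \<noteq> y \<Longrightarrow> 1 \<le> norm1 d (x - y)"
  using norm1_gt_of_not_mem_cube[of y d 0 x] cube_0[of x d] by auto

definition linf_dist :: "nat \<Rightarrow> (nat \<Rightarrow> int) \<Rightarrow> (nat \<Rightarrow> int) \<Rightarrow> nat" where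
  "linf_dist d x q = Max ((\<lambda>n. nat \<bar>x n - q n\<bar>) ` {..<d})"

lemma mem_cube_iff_linf_dist:
  assumes "1 \<le> d"
  shows "x \<in> cube d t q \<longleftrightarrow> x \<in> lat d \<and> linf_dist d x q \<le> t"
proof -
  have "linf_dist d x q \<le> t \<longleftrightarrow> (\<forall>n<d. nat \<bar>x n - q n\<bar> \<le> t)"
    unfolding linf_dist_def using assms by (subst Max_le_iff) (auto simp: lessThan_empty_iff)
  also have "\<dots> \<longleftrightarrow> (\<forall>n<d. \<bar>x n - q n\<bar> \<le> int t)" by (auto simp: nat_le_iff)
  finally show ?thesis by (auto simp: cube_def)
qed

lemma config_cases: "config d u \<Longrightarrow> i \<in> lat d \<Longrightarrow> u i = 1 \<or> u i = -1"
  by (auto simp: config_def)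

definition phase :: "nat \<Rightarrow> ((nat \<Rightarrow> int) \<Rightarrow> real) \<Rightarrow> real \<Rightarrow> (nat \<Rightarrow> int) \<Rightarrow> nat \<Rightarrow> (nat \<Rightarrow> int) set" where
  "phase d u \<sigma> q r = {x \<in> cube d r q. u x = \<sigma>}"

lemma phase_subset_cube: "phase d u \<sigma> q r \<subseteq> cube d r q"
  by (auto simp: phase_def)

lemma phase_subset_lat: "phase d u \<sigma> q r \<subseteq> lat d"
  using phase_subset_cube cube_subset_lat by blast

lemma finite_phase: "finite (phase d u \<sigma> q r)"
  using finite_subset[OF phase_subset_cube finite_cube] .

lemma phase_mono: "r \<le> r' \<Longrightarrow> phase d u \<sigma> q r \<subseteq> phase d u \<sigma> q r'"
  using cube_mono[of r r' d q] by (auto simp: phase_def)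

lemma card_phase_1_ge_1:
  assumes "q \<in> bdry d u" "\<sigma> = 1 \<or> \<sigma> = -1"
  shows "1 \<le> card (phase d u \<sigma> q 1)"
proof -
  obtain j where j: "j \<in> lat d" "norm1 d (q - j) = 1" "u j = -1" "q \<in> lat d" "u q = 1"
    using assms(1) by (auto simp: bdry_def)
  have "\<bar>j n - q n\<bar> \<le> 1" if "n < d" for n
    using abs_le_norm1[OF that, of "q - j"] j(2) by (simp add: abs_minus_commute)
  then have "j \<in> phase d u (-1) q 1" "q \<in> phase d u 1 q 1"
    using j by (auto simp: phase_def cube_def)
  then have "phase d u \<sigma> q 1 \<noteq> {}" using assms(2) by auto
  then show ?thesis using finite_phase by (simp add: Suc_le_eq card_gt_0_iff)
qed

lemma one_plus_le_powr_ratio: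
  fixes x y e :: real
  assumes "0 < x" "x \<le> y" "0 \<le> e"
  shows "1 + e * (1 - x / y) \<le> (y / x) powr e"
proof -
  have y: "0 < y" using assms by linarith
  have "1 - x / y \<le> ln (y / x)"
    using ln_le_minus_one[of "x / y"] assms y by (simp add: ln_div)
  then have "1 + e * (1 - x / y) \<le> 1 + e * ln (y / x)"
    using assms(3) by (simp add: mult_left_mono)
  also have "\<dots> \<le> exp (e * ln (y / x))" by (rule exp_ge_add_one_self)
  also have "\<dots> = (y / x) powr e" using assms y by (simp add: powr_def)
  finally show ?thesis .
qed

lemma powr_succ_le_diff:
  fixes k s :: real
  assumes "0 < k" "0 < s"
  shows "(k + 1) powr (-1 - s) \<le> (k powr (-s) - (k + 1) powr (-s)) / s"
proof -
  define b where "b = k + 1"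
  have b0: "0 < b" using assms by (simp add: b_def)
  have "1 + s / b \<le> (b / k) powr s"
    using one_plus_le_powr_ratio[of k b s] assms b0 by (simp add: b_def field_simps)
  then have "b powr (-s) * (s / b) \<le> b powr (-s) * ((b / k) powr s - 1)"
    by (intro mult_left_mono) auto
  moreover have "k powr (-s) = b powr (-s) * (b / k) powr s"
    using assms b0 by (simp add: powr_divide powr_minus field_simps)
  ultimately have "s * (b powr (-s) / b) \<le> k powr (-s) - b powr (-s)"
    by (simp add: algebra_simps)
  then have "b powr (-s) / b \<le> (k powr (-s) - b powr (-s)) / s"
    using assms by (simp add: field_simps)
  moreover have "b powr (-1 - s) = b powr (-s) / b"
    using b0 by (simp add: powr_diff powr_minus divide_inverse)
  ultimately show ?thesis by (simp add: b_def)
qed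

lemma powr_le_diff_powr:
  fixes m s :: real
  assumes "1 \<le> m" "0 < s" "s < 1"
  shows "m powr (-s) \<le> 2 / (1 - s) * (m powr (1 - s) - (m - 1) powr (1 - s))"
proof (cases "m = 1")
  case True
  then show ?thesis using assms by (simp add: field_simps)
next
  case False
  define x a where "x = m - 1" and "a = 1 - s"
  have x0: "0 < x" and a0: "0 < a" and m0: "0 < m" using False assms by (auto simp: x_def a_def)
  have "1 + a / m \<le> (m / x) powr a"
    using one_plus_le_powr_ratio[of x m a] x0 a0 m0 by (simp add: x_def field_simps)
  then have "x powr a \<le> m powr a / (1 + a / m)"
    using x0 m0 a0 by (simp add: powr_divide field_simps)
  also have "\<dots> = m powr a - m powr a * a / (m + a)"
    using m0 a0 by (simp add: field_simps)
  finally have "x powr a \<le> m powr a - m powr a * a / (m + a)" .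
  moreover have "m powr a * a / (2 * m) \<le> m powr a * a / (m + a)"
    using m0 a0 assms by (intro divide_left_mono) (auto simp: a_def)
  moreover have "a / 2 * (m powr a / m) = m powr a * a / (2 * m)" by simp
  ultimately have "a / 2 * (m powr a / m) \<le> m powr a - x powr a" by linarith
  moreover have "m powr a / m = m powr (-s)"
    using m0 by (simp add: a_def powr_diff powr_minus_divide)
  ultimately have "a / 2 * m powr (-s) \<le> m powr a - x powr a" by simp
  then have "m powr (-s) \<le> 2 / a * (m powr a - x powr a)"
    using a0 by (simp add: field_simps)
  then show ?thesis by (simp add: a_def x_def)
qed

lemma sum_powr_tail_le:
  fixes s :: real
  assumes "1 \<le> m" "0 < s"
  shows "(\<Sum>k\<in>{m..K}. real k powr (-1 - s)) \<le> (1 + 1 / s) * real m powr (-s)"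
proof -
  have tel: "(\<Sum>k\<in>{m..K}. real k powr (-1 - s))
      \<le> real m powr (-1 - s) + (real m powr (-s) - real K powr (-s)) / s" if "m \<le> K"
    using that
  proof (induction K rule: dec_induct)
    case (step K)
    have "real (Suc K) powr (-1 - s) \<le> (real K powr (-s) - real (Suc K) powr (-s)) / s"
      using powr_succ_le_diff[of "real K" s] step assms by (simp add: add.commute)
    moreover have "{m..Suc K} = insert (Suc K) {m..K}" using step by auto
    ultimately show ?case using step.IH by (simp add: diff_divide_distrib)
  qed simp
  show ?thesis
  proof (cases "m \<le> K")
    case True
    have "real m powr (-1 - s) \<le> real m powr (-s)"
      using assms by (intro powr_mono) auto
    moreover have "(real m powr (-s) - real K powr (-s)) / s \<le> real m powr (-s) / s"
      using assms by (intro divide_right_mono) auto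
    ultimately have "(\<Sum>k\<in>{m..K}. real k powr (-1 - s)) \<le> real m powr (-s) + real m powr (-s) / s"
      using tel[OF True] by linarith
    then show ?thesis by (simp add: algebra_simps)
  qed (use assms in simp)
qed

lemma sum_powr_le:
  fixes s :: real
  assumes "0 < s" "s < 1"
  shows "(\<Sum>m\<in>{1..N}. real m powr (-s)) \<le> 2 / (1 - s) * real N powr (1 - s)"
proof (induction N)
  case (Suc N)
  have "real (Suc N) powr (-s)
      \<le> 2 / (1 - s) * (real (Suc N) powr (1 - s) - real N powr (1 - s))"
    using powr_le_diff_powr[of "real (Suc N)" s] assms by simp
  then show ?case using Suc.IH by (simp add: algebra_simps)
qed simp

lemma sum_shifted_powr_le:
  fixes s :: real
  assumes "t \<le> R" "0 < s" "s < 1"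
  shows "(\<Sum>r\<in>{R'..R}. if t \<le> r then real (r - t + 1) powr (-s) else 0)
     \<le> 2 / (1 - s) * real (R + 1) powr (1 - s)"
proof -
  have "(\<Sum>r\<in>{R'..R}. if t \<le> r then real (r - t + 1) powr (-s) else 0)
      = (\<Sum>r\<in>{R'..R} \<inter> {t..}. real (r - t + 1) powr (-s))"
    by (simp only: sum.inter_restrict[OF finite_atLeastAtMost] atLeast_iff)
  also have "\<dots> \<le> (\<Sum>r\<in>{t..R}. real (r - t + 1) powr (-s))"
    by (rule sum_mono2) auto
  also have "\<dots> = (\<Sum>m\<in>(\<lambda>r. r - t + 1) ` {t..R}. real m powr (-s))"
    by (subst sum.reindex) (auto simp: inj_on_def)
  also have "\<dots> \<le> (\<Sum>m\<in>{1..R + 1}. real m powr (-s))"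
    by (rule sum_mono2) auto
  also have "\<dots> \<le> 2 / (1 - s) * real (R + 1) powr (1 - s)"
    using assms by (intro sum_powr_le)
  finally show ?thesis .
qed

lemma power_diff_le:
  fixes a b :: real
  assumes "0 \<le> b" "b \<le> a"
  shows "a ^ n - b ^ n \<le> real n * (a - b) * a ^ (n - 1)"
proof (induction n)
  case (Suc n)
  have "a ^ Suc n - b ^ Suc n = a * (a ^ n - b ^ n) + (a - b) * b ^ n"
    by (simp add: algebra_simps)
  also have "\<dots> \<le> a * (real n * (a - b) * a ^ (n - 1)) + (a - b) * a ^ n"
    using Suc.IH assms by (intro add_mono mult_left_mono mult_right_mono power_mono) auto
  also have "\<dots> = real (Suc n) * (a - b) * a ^ n"
    by (cases n) (simp_all add: algebra_simps)
  finally show ?case by simp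
qed simp

lemma exists_radius_power_ge:
  assumes "1 \<le> n" "1 \<le> d"
  obtains R :: nat
  where "1 \<le> R" "2 * real n \<le> real R ^ d" "real R \<le> 2 * (2 * real n) powr (1 / real d)"
proof
  define t where "t = (2 * real n) powr (1 / real d)"
  have t: "1 \<le> t" unfolding t_def using assms by (intro ge_one_powr_ge_zero) auto
  have "t ^ d = 2 * real n"
    using assms t by (simp add: t_def powr_realpow[symmetric] powr_powr)
  moreover have "t ^ d \<le> real (nat \<lceil>t\<rceil>) ^ d"
    using t by (intro power_mono) linarith+
  ultimately show "2 * real n \<le> real (nat \<lceil>t\<rceil>) ^ d" by simp
  show "1 \<le> nat \<lceil>t\<rceil>" "real (nat \<lceil>t\<rceil>) \<le> 2 * (2 * real n) powr (1 / real d)"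
    using t by (simp_all add: t_def[symmetric]) linarith+
qed

section \<open>Sums of the power-law kernel\<close>

definition power_kernel :: "nat \<Rightarrow> real \<Rightarrow> (nat \<Rightarrow> int) \<Rightarrow> (nat \<Rightarrow> int) \<Rightarrow> real" where
  "power_kernel d s x y = real_of_int (norm1 d (x - y)) powr (-(real d + s))"

definition tail_const :: "nat \<Rightarrow> real \<Rightarrow> real" where
  "tail_const d s = 2 * real d * 3 ^ (d - 1) * (1 + 1 / s)"

lemma tail_const_pos: "1 \<le> d \<Longrightarrow> 0 < s \<Longrightarrow> 0 < tail_const d s"
  by (simp add: tail_const_def add_pos_pos)

lemma power_kernel_nonneg: "0 \<le> power_kernel d s x y"
  by (simp add: power_kernel_def)

text \<open>The kernel vanishes on the diagonal because \<open>0 powr a = 0\<close>.\<close>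

lemma power_kernel_self: "power_kernel d s x x = 0"
  by (simp add: power_kernel_def norm1_def)

lemma power_kernel_le_of_not_mem_cube:
  assumes "y \<in> lat d" "y \<notin> cube d k x" "0 \<le> s"
  shows "power_kernel d s x y \<le> real (Suc k) powr (-(real d + s))"
proof -
  have "real (Suc k) \<le> real_of_int (norm1 d (x - y))"
    using norm1_gt_of_not_mem_cube[OF assms(1,2)] by simp
  then show ?thesis
    unfolding power_kernel_def using assms(3) by (intro powr_mono2') auto
qed

lemma card_cube_shell:
  "real (card (cube d (Suc k) x - cube d k x)) = real ((2 * Suc k + 1) ^ d) - real ((2 * Suc k - 1) ^ d)"
proof -
  have "card (cube d k x) \<le> card (cube d (Suc k) x)"
    by (rule card_mono) (auto simp: finite_cube cube_mono)
  moreover have "card (cube d (Suc k) x - cube d k x) = card (cube d (Suc k) x) - card (cube d k x)"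
    by (rule card_Diff_subset) (auto simp: finite_cube cube_mono)
  ultimately show ?thesis by (simp add: card_cube of_nat_diff)
qed

lemma sum_power_kernel_annulus_le:
  assumes "1 \<le> m" "0 \<le> s"
  shows "(\<Sum>y\<in>cube d K x - cube d (m - 1) x. power_kernel d s x y)
     \<le> (\<Sum>k\<in>{m..K}. (real ((2 * k + 1) ^ d) - real ((2 * k - 1) ^ d)) * real k powr (-(real d + s)))"
proof (induction K)
  case 0
  have empty: "cube d 0 x - cube d (m - 1) x = {}" using cube_mono[of 0 "m - 1" d x] by auto
  show ?case by (subst empty) (use assms in simp)
next
  case (Suc K)
  show ?case
  proof (cases "Suc K < m")
    case True
    then have empty: "cube d (Suc K) x - cube d (m - 1) x = {}"
      using cube_mono[of "Suc K" "m - 1" d x] by auto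
    show ?thesis by (subst empty) (use True in simp)
  next
    case False
    define S where "S = cube d (Suc K) x - cube d K x"
    have "m - 1 \<le> K" using False by simp
    then have split: "cube d (Suc K) x - cube d (m - 1) x = (cube d K x - cube d (m - 1) x) \<union> S"
      using cube_mono[of K "Suc K" d x] cube_mono[of "m - 1" K d x] by (auto simp: S_def)
    have "(\<Sum>y\<in>S. power_kernel d s x y) \<le> real (card S) * real (Suc K) powr (-(real d + s))"
      using power_kernel_le_of_not_mem_cube[of _ d K x s] assms(2) cube_subset_lat[of d "Suc K" x]
      by (intro sum_bounded_above[of S "power_kernel d s x", simplified]) (auto simp: S_def)
    moreover have "(\<Sum>y\<in>cube d (Suc K) x - cube d (m - 1) x. power_kernel d s x y)
        = (\<Sum>y\<in>cube d K x - cube d (m - 1) x. power_kernel d s x y) + (\<Sum>y\<in>S. power_kernel d s x y)"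
      unfolding split by (rule sum.union_disjoint) (auto simp: S_def finite_cube)
    moreover have "{m..Suc K} = insert (Suc K) {m..K}" using False by auto
    ultimately show ?thesis
      using Suc.IH card_cube_shell[of d K x] by (simp add: S_def add.commute)
  qed
qed

lemma shell_weight_le:
  assumes "1 \<le> k" "1 \<le> d"
  shows "(real ((2 * k + 1) ^ d) - real ((2 * k - 1) ^ d)) * real k powr (-(real d + s))
     \<le> 2 * real d * 3 ^ (d - 1) * real k powr (-1 - s)"
proof -
  have "real ((2 * k + 1) ^ d) - real ((2 * k - 1) ^ d) = (2 * real k + 1) ^ d - (2 * real k - 1) ^ d"
    using assms by (simp add: of_nat_diff add.commute)
  also have "\<dots> \<le> real d * ((2 * real k + 1) - (2 * real k - 1)) * (2 * real k + 1) ^ (d - 1)"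
    by (rule power_diff_le) (use assms in auto)
  also have "\<dots> = 2 * real d * (2 * real k + 1) ^ (d - 1)" by simp
  also have "\<dots> \<le> 2 * real d * (3 * real k) ^ (d - 1)"
    using assms by (intro mult_left_mono power_mono) auto
  finally have "real ((2 * k + 1) ^ d) - real ((2 * k - 1) ^ d) \<le> 2 * real d * 3 ^ (d - 1) * real k powr (real d - 1)"
    using assms by (simp add: power_mult_distrib powr_realpow[symmetric] of_nat_diff)
  then have "(real ((2 * k + 1) ^ d) - real ((2 * k - 1) ^ d)) * real k powr (-(real d + s))
      \<le> 2 * real d * 3 ^ (d - 1) * real k powr (real d - 1) * real k powr (-(real d + s))"
    by (rule mult_right_mono) simp
  also have "\<dots> = 2 * real d * 3 ^ (d - 1) * (real k powr (real d - 1) * real k powr (-(real d + s)))"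
    by (simp only: mult.assoc)
  also have "real k powr (real d - 1) * real k powr (-(real d + s)) = real k powr (-1 - s)"
    by (simp flip: powr_add)
  finally show ?thesis .
qed

lemma sum_power_kernel_far_le:
  assumes "1 \<le> m" "1 \<le> d" "0 < s" "finite G" "G \<subseteq> lat d - cube d (m - 1) x"
  shows "(\<Sum>y\<in>G. power_kernel d s x y) \<le> tail_const d s * real m powr (-s)"
proof -
  define K where "K = (\<Sum>y\<in>G. nat (norm1 d (y - x)))"
  have "G \<subseteq> cube d K x - cube d (m - 1) x"
  proof
    fix y assume y: "y \<in> G"
    have "nat (norm1 d (y - x)) \<le> K"
      unfolding K_def using y assms(4) by (intro member_le_sum) auto
    then have "\<bar>y n - x n\<bar> \<le> int K" if "n < d" for n
      using abs_le_norm1[OF that, of "y - x"] norm1_nonneg[of d "y - x"] by simp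
    then show "y \<in> cube d K x - cube d (m - 1) x" using y assms(5) by (auto simp: cube_def)
  qed
  then have "(\<Sum>y\<in>G. power_kernel d s x y) \<le> (\<Sum>y\<in>cube d K x - cube d (m - 1) x. power_kernel d s x y)"
    by (intro sum_mono2) (auto simp: finite_cube power_kernel_nonneg)
  also have "\<dots> \<le> (\<Sum>k\<in>{m..K}. (real ((2 * k + 1) ^ d) - real ((2 * k - 1) ^ d)) * real k powr (-(real d + s)))"
    using assms by (intro sum_power_kernel_annulus_le) auto
  also have "\<dots> \<le> (\<Sum>k\<in>{m..K}. 2 * real d * 3 ^ (d - 1) * real k powr (-1 - s))"
    using assms by (intro sum_mono shell_weight_le) auto
  also have "\<dots> = 2 * real d * 3 ^ (d - 1) * (\<Sum>k\<in>{m..K}. real k powr (-1 - s))"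
    by (simp add: sum_distrib_left)
  also have "\<dots> \<le> 2 * real d * 3 ^ (d - 1) * ((1 + 1 / s) * real m powr (-s))"
    using assms by (intro mult_left_mono sum_powr_tail_le) auto
  finally show ?thesis by (simp add: tail_const_def mult.assoc)
qed

lemma sum_power_kernel_le:
  assumes "x \<in> lat d" "1 \<le> d" "0 < s" "finite G" "G \<subseteq> lat d"
  shows "(\<Sum>y\<in>G. power_kernel d s x y) \<le> tail_const d s"
proof -
  have "(\<Sum>y\<in>G. power_kernel d s x y) = (\<Sum>y\<in>G - {x}. power_kernel d s x y)"
    using assms by (intro sum.mono_neutral_right) (auto simp: power_kernel_self)
  also have "\<dots> \<le> tail_const d s * real (1::nat) powr (-s)"
    using assms cube_0[OF assms(1)] by (intro sum_power_kernel_far_le) auto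
  finally show ?thesis by simp
qed

lemma finite_fiber: "finite G \<Longrightarrow> finite {y. (x, y) \<in> G}"
  by (rule finite_subset[of _ "snd ` G"]) force+

lemma sum_Sigma_le:
  fixes f :: "'a \<Rightarrow> 'b \<Rightarrow> real"
  assumes "finite A" "finite G" "G \<subseteq> A \<times> UNIV"
    and "\<And>x. x \<in> A \<Longrightarrow> sum (f x) {y. (x, y) \<in> G} \<le> b x"
  shows "(\<Sum>(i,j)\<in>G. f i j) \<le> (\<Sum>x\<in>A. b x)"
proof -
  have "G = Sigma A (\<lambda>x. {y. (x, y) \<in> G})" using assms(3) by auto
  then have "(\<Sum>(i,j)\<in>G. f i j) = (\<Sum>x\<in>A. sum (f x) {y. (x, y) \<in> G})"
    using assms(1,2) by (simp add: sum.Sigma finite_fiber)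
  also have "\<dots> \<le> (\<Sum>x\<in>A. b x)" using assms(4) by (rule sum_mono)
  finally show ?thesis .
qed

lemma infsum_diff:
  fixes f g :: "'a \<Rightarrow> real"
  assumes "f summable_on A" "g summable_on A"
  shows "infsum (\<lambda>x. f x - g x) A = infsum f A - infsum g A"
  using infsum_add[OF assms(1) summable_on_uminus[THEN iffD2, OF assms(2)]]
  by (simp add: infsum_uminus)

lemma infsum_Times_Un_swap:
  fixes g :: "'a \<times> 'a \<Rightarrow> real"
  assumes "g summable_on B \<times> C" "B \<inter> C = {}" "\<And>i j. i \<in> B \<Longrightarrow> j \<in> C \<Longrightarrow> g (j, i) = g (i, j)"
  shows "infsum g (B \<times> C \<union> C \<times> B) = 2 * infsum g (B \<times> C)"
proof -
  have bij: "bij_betw prod.swap (B \<times> C) (C \<times> B)"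
    by (auto simp: bij_betw_def inj_on_def)
  have swap: "infsum (\<lambda>p. g (prod.swap p)) (B \<times> C) = infsum g (B \<times> C)"
    using assms(3) by (intro infsum_cong) auto
  have "(\<lambda>p. g (prod.swap p)) summable_on B \<times> C \<longleftrightarrow> g summable_on B \<times> C"
    using assms(3) by (intro summable_on_cong) auto
  then have "g summable_on C \<times> B"
    using assms(1) summable_on_reindex_bij_betw[OF bij, of g] by simp
  then have "infsum g (B \<times> C \<union> C \<times> B) = infsum g (B \<times> C) + infsum g (C \<times> B)"
    using assms(1,2) by (intro infsum_Un_disjoint) auto
  also have "infsum g (C \<times> B) = infsum g (B \<times> C)"
    using infsum_reindex_bij_betw[OF bij, of g] swap by simp
  finally show ?thesis by simp
qed

section \<open>Doubling growth implies volume growth\<close>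

text \<open>The largest \<open>c \<le> 1\<close> for which the induction step \<open>c 2^d \<le> K c^(1-s/d)\<close> closes.\<close>

definition density_const :: "nat \<Rightarrow> real \<Rightarrow> real \<Rightarrow> real" where
  "density_const d s K = min 1 ((K / 2 ^ d) powr (real d / s))"

lemma density_const_pos: "0 < K \<Longrightarrow> 0 < density_const d s K"
  by (simp add: density_const_def)

lemma density_const_doubling:
  assumes "0 < K" "0 < s" "s \<le> real d"
  shows "density_const d s K * 2 ^ d \<le> K * density_const d s K powr (1 - s / real d)"
proof -
  define c where "c = density_const d s K"
  have c: "0 < c" using density_const_pos[OF assms(1)] by (simp add: c_def)
  have d: "0 < real d" using assms by linarith
  have "c powr (s / real d) \<le> ((K / 2 ^ d) powr (real d / s)) powr (s / real d)"
    using c assms d by (intro powr_mono2) (auto simp: c_def density_const_def)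
  also have "\<dots> = K / 2 ^ d" using assms d by (simp add: powr_powr)
  finally have "c powr (s / real d) * 2 ^ d \<le> K" by (simp add: pos_le_divide_eq)
  then have "c powr (s / real d) * 2 ^ d * c powr (1 - s / real d) \<le> K * c powr (1 - s / real d)"
    by (rule mult_right_mono) simp
  moreover have "c powr (s / real d) * c powr (1 - s / real d) = c"
    using c by (simp flip: powr_add)
  ultimately show ?thesis by (simp add: c_def mult.commute mult.left_commute)
qed

lemma dyadic_volume_growth:
  fixes V :: "nat \<Rightarrow> real"
  assumes "0 < K" "0 < s" "s \<le> real d" "1 \<le> V 1"
    and growth: "\<And>R. 1 \<le> R \<Longrightarrow> 2 * R \<le> l \<Longrightarrow>
      K * real R powr s * V R powr (1 - s / real d) \<le> V (2 * R)"
  shows "2 ^ k \<le> l \<Longrightarrow> density_const d s K * real (2 ^ k) ^ d \<le> V (2 ^ k)"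
proof (induction k)
  case 0
  then show ?case using assms(4) by (simp add: density_const_def)
next
  case (Suc k)
  define c X e where "c = density_const d s K" and "X = real ((2::nat) ^ k)" and "e = 1 - s / real d"
  have X: "1 \<le> X" by (simp add: X_def)
  have c: "0 < c" using density_const_pos[OF assms(1)] by (simp add: c_def)
  have e: "0 \<le> e" "real d * e = real d - s" using assms by (auto simp: e_def field_simps)
  have Xd: "X ^ d = X powr real d" using X by (simp add: powr_realpow)
  have split: "(c * X ^ d) powr e = c powr e * X powr (real d - s)"
    using c X e unfolding Xd by (simp add: powr_mult powr_powr)
  have XX: "X powr s * X powr (real d - s) = X ^ d"
    unfolding Xd by (simp flip: powr_add)
  have "c * 2 ^ d \<le> K * c powr e"
    using density_const_doubling[OF assms(1-3)] by (simp add: c_def e_def)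
  then have "c * 2 ^ d * X ^ d \<le> K * c powr e * X ^ d"
    using X by (intro mult_right_mono) auto
  also have "\<dots> = K * X powr s * (c * X ^ d) powr e"
    by (subst split) (simp only: XX[symmetric] mult_ac)
  also have "\<dots> \<le> K * X powr s * V (2 ^ k) powr e"
    using Suc c X e assms(1) by (intro mult_left_mono powr_mono2) (auto simp: c_def X_def)
  also have "\<dots> \<le> V (2 ^ Suc k)"
    using growth[of "2 ^ k"] Suc.prems by (simp add: X_def e_def)
  finally show ?case by (simp add: c_def X_def power_mult_distrib mult_ac)
qed

lemma volume_growth:
  fixes V :: "nat \<Rightarrow> real"
  assumes "0 < K" "0 < s" "s \<le> real d" "1 \<le> V 1" "mono V" "1 \<le> l"
    and "\<And>R. 1 \<le> R \<Longrightarrow> 2 * R \<le> l \<Longrightarrow>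
      K * real R powr s * V R powr (1 - s / real d) \<le> V (2 * R)"
  shows "density_const d s K / 2 ^ d * real l ^ d \<le> V l"
proof -
  obtain k where "floorlog 2 l = Suc k"
    using assms(6) by (cases "floorlog 2 l") (auto simp: floorlog_def)
  then have k: "2 ^ k \<le> l" "l \<le> 2 * 2 ^ k"
    using floorlog_bounds[of l 2] assms(6) by auto
  have "real l ^ d \<le> (2 * real (2 ^ k)) ^ d"
    using of_nat_le_iff[of l "2 * 2 ^ k", THEN iffD2, OF k(2)] by (intro power_mono) simp_all
  then have "density_const d s K / 2 ^ d * real l ^ d \<le> density_const d s K * real (2 ^ k) ^ d"
    using density_const_pos[OF assms(1)] by (simp add: power_mult_distrib divide_le_eq mult_ac)
  also have "\<dots> \<le> V (2 ^ k)"
    using dyadic_volume_growth[OF assms(1-4) assms(7) k(1)] .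
  also have "\<dots> \<le> V l" using assms(5) k(1) by (rule monoD)
  finally show ?thesis .
qed

definition iso_const :: "nat \<Rightarrow> real \<Rightarrow> real \<Rightarrow> real" where
  "iso_const d s lam = lam / 2 * real d powr (-(real d + s)) * 2 powr (-s) * 2 powr (-s / real d)"

definition growth_const :: "nat \<Rightarrow> real \<Rightarrow> real \<Rightarrow> real \<Rightarrow> real" where
  "growth_const d s lam Lam = iso_const d s lam * (1 - s) / (12 * (Lam * tail_const d s))"

definition energy_const :: "nat \<Rightarrow> real \<Rightarrow> real \<Rightarrow> real \<Rightarrow> real" where
  "energy_const d s lam Lam = 2 * lam * (density_const d s (growth_const d s lam Lam) / 2 ^ d) ^ 2
     * (2 * real d) powr (-(real d + s))"

lemma iso_const_pos: "1 \<le> d \<Longrightarrow> 0 < lam \<Longrightarrow> 0 < iso_const d s lam"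
  by (simp add: iso_const_def)

lemma growth_const_pos:
  "1 \<le> d \<Longrightarrow> 0 < s \<Longrightarrow> s < 1 \<Longrightarrow> 0 < lam \<Longrightarrow> lam \<le> Lam \<Longrightarrow> 0 < growth_const d s lam Lam"
  unfolding growth_const_def using iso_const_pos tail_const_pos by simp

lemma density_growth_const_pos:
  "1 \<le> d \<Longrightarrow> 0 < s \<Longrightarrow> s < 1 \<Longrightarrow> 0 < lam \<Longrightarrow> lam \<le> Lam
    \<Longrightarrow> 0 < density_const d s (growth_const d s lam Lam)"
  by (intro density_const_pos growth_const_pos)

lemma energy_const_pos:
  "1 \<le> d \<Longrightarrow> 0 < s \<Longrightarrow> s < 1 \<Longrightarrow> 0 < lam \<Longrightarrow> lam \<le> Lam \<Longrightarrow> 0 < energy_const d s lam Lam"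
  unfolding energy_const_def using density_growth_const_pos[of d s lam Lam] by simp

locale power_law_coupling =
  fixes d :: nat and s lam Lam :: real and J :: "(nat \<Rightarrow> int) \<Rightarrow> (nat \<Rightarrow> int) \<Rightarrow> real"
  assumes d_ge_1: "1 \<le> d" and s_pos: "0 < s" and s_less_1: "s < 1"
    and lam_pos: "0 < lam" and lam_le_Lam: "lam \<le> Lam"
    and nonneg: "J_nonneg d J" and symmetric: "J1 d J" and diagonal: "J2 d J"
    and power_law: "JP d s lam Lam J"
begin

lemma Lam_pos: "0 < Lam"
  using lam_pos lam_le_Lam by linarith

lemma J_nonneg: "x \<in> lat d \<Longrightarrow> y \<in> lat d \<Longrightarrow> 0 \<le> J x y"
  using nonneg by (simp add: J_nonneg_def)

lemma J_sym: "x \<in> lat d \<Longrightarrow> y \<in> lat d \<Longrightarrow> J x y = J y x"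
  using symmetric by (simp add: J1_def)

lemma J_le_power_kernel: "x \<in> lat d \<Longrightarrow> y \<in> lat d \<Longrightarrow> J x y \<le> Lam * power_kernel d s x y"
  using diagonal power_law by (cases "x = y") (auto simp: J2_def JP_def power_kernel_def norm1_def)

lemma power_kernel_le_J:
  "x \<in> lat d \<Longrightarrow> y \<in> lat d \<Longrightarrow> x \<noteq> y \<Longrightarrow> lam * power_kernel d s x y \<le> J x y"
  using power_law by (simp add: JP_def power_kernel_def)

lemma sum_J_le_sum_power_kernel:
  "x \<in> lat d \<Longrightarrow> G \<subseteq> lat d \<Longrightarrow> (\<Sum>y\<in>G. J x y) \<le> Lam * (\<Sum>y\<in>G. power_kernel d s x y)"
  by (auto simp: sum_distrib_left intro!: sum_mono J_le_power_kernel)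

lemma sum_J_far_le:
  assumes "x \<in> lat d" "1 \<le> m" "finite G" "G \<subseteq> lat d - cube d (m - 1) x"
  shows "(\<Sum>y\<in>G. J x y) \<le> Lam * tail_const d s * real m powr (-s)"
proof -
  have "(\<Sum>y\<in>G. J x y) \<le> Lam * (\<Sum>y\<in>G. power_kernel d s x y)"
    using assms by (intro sum_J_le_sum_power_kernel) auto
  also have "\<dots> \<le> Lam * (tail_const d s * real m powr (-s))"
    using assms d_ge_1 s_pos Lam_pos by (intro mult_left_mono sum_power_kernel_far_le) auto
  finally show ?thesis by (simp add: mult.assoc)
qed

lemma sum_J_le:
  assumes "x \<in> lat d" "finite G" "G \<subseteq> lat d"
  shows "(\<Sum>y\<in>G. J x y) \<le> Lam * tail_const d s"
proof -
  have "(\<Sum>y\<in>G. J x y) \<le> Lam * (\<Sum>y\<in>G. power_kernel d s x y)"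
    using assms by (intro sum_J_le_sum_power_kernel) auto
  also have "\<dots> \<le> Lam * tail_const d s"
    using assms d_ge_1 s_pos Lam_pos by (intro mult_left_mono sum_power_kernel_le) auto
  finally show ?thesis .
qed

lemma summable_J_Times_lat:
  assumes "finite A" "A \<subseteq> lat d"
  shows "(\<lambda>(i,j). J i j) summable_on A \<times> lat d"
proof (rule nonneg_bdd_above_summable_on)
  show "0 \<le> (case p of (i, j) \<Rightarrow> J i j)" if "p \<in> A \<times> lat d" for p
    using that assms J_nonneg by auto
  have "(\<Sum>(i,j)\<in>F. J i j) \<le> (\<Sum>x\<in>A. Lam * tail_const d s)"
    if "finite F" "F \<subseteq> A \<times> lat d" for F
    using that assms by (intro sum_Sigma_le sum_J_le finite_fiber) auto
  then show "bdd_above (sum (\<lambda>(i, j). J i j) ` {F. F \<subseteq> A \<times> lat d \<and> finite F})"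
    by (intro bdd_aboveI) blast
qed

lemma summable_J_lat_Times:
  assumes "finite A" "A \<subseteq> lat d"
  shows "(\<lambda>(i,j). J i j) summable_on lat d \<times> A"
proof -
  have bij: "bij_betw prod.swap (lat d \<times> A) (A \<times> lat d)"
    by (auto simp: bij_betw_def inj_on_def)
  have "(\<lambda>p. (\<lambda>(i,j). J i j) (prod.swap p)) summable_on lat d \<times> A"
    using summable_on_reindex_bij_betw[OF bij] summable_J_Times_lat[OF assms] by blast
  moreover have "(\<lambda>p. (\<lambda>(i,j). J i j) (prod.swap p)) summable_on lat d \<times> A
      \<longleftrightarrow> (\<lambda>(i,j). J i j) summable_on lat d \<times> A"
    using assms by (intro summable_on_cong) (auto simp: J_sym)
  ultimately show ?thesis by blast
qed

lemma summable_on_dominated: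
  fixes g :: "(nat \<Rightarrow> int) \<times> (nat \<Rightarrow> int) \<Rightarrow> real"
  assumes "finite A" "A \<subseteq> lat d" "P \<subseteq> A \<times> lat d \<union> lat d \<times> A"
    and "\<And>i j. (i, j) \<in> P \<Longrightarrow> \<bar>g (i, j)\<bar> \<le> c * J i j"
  shows "g summable_on P"
proof -
  have "(\<lambda>(i,j). J i j) summable_on A \<times> lat d \<union> lat d \<times> A"
    using assms by (intro summable_on_union summable_J_Times_lat summable_J_lat_Times)
  then have "(\<lambda>(i,j). J i j) summable_on P"
    using assms(3) by (rule summable_on_subset)
  then have "(\<lambda>p. c * (case p of (i,j) \<Rightarrow> J i j)) summable_on P"
    by (rule summable_on_cmult_right)
  then have "(\<lambda>p. norm (g p)) summable_on P"
    by (rule summable_on_comparison_test) (use assms(4) in auto)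
  then show ?thesis by (rule abs_summable_summable)
qed

lemma summable_bond_energy:
  assumes "config d u" "finite A" "A \<subseteq> lat d" "P \<subseteq> A \<times> lat d \<union> lat d \<times> A"
  shows "(\<lambda>(i,j). J i j * (1 - u i * u j)) summable_on P"
proof (rule summable_on_dominated[OF assms(2-4), where c = 2])
  fix i j assume "(i, j) \<in> P"
  then have "i \<in> lat d" "j \<in> lat d" using assms by auto
  then show "\<bar>case (i, j) of (i, j) \<Rightarrow> J i j * (1 - u i * u j)\<bar> \<le> 2 * J i j"
    using config_cases[OF assms(1), of i] config_cases[OF assms(1), of j] J_nonneg[of i j]
    by (auto simp: abs_mult)
qed

lemma summable_bond_sign:
  assumes "config d u" "finite A" "A \<subseteq> lat d" "P \<subseteq> A \<times> lat d \<union> lat d \<times> A"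
  shows "(\<lambda>(i,j). J i j * u i * u j) summable_on P"
proof (rule summable_on_dominated[OF assms(2-4), where c = 1])
  fix i j assume "(i, j) \<in> P"
  then have "i \<in> lat d" "j \<in> lat d" using assms by auto
  then show "\<bar>case (i, j) of (i, j) \<Rightarrow> J i j * u i * u j\<bar> \<le> 1 * J i j"
    using config_cases[OF assms(1), of i] config_cases[OF assms(1), of j] J_nonneg[of i j]
    by (auto simp: abs_mult)
qed

text \<open>Only the bonds between \<open>A\<close> and its complement change, and each of them appears twice in \<open>Hen\<close>.\<close>

lemma Hen_flip:
  assumes u: "config d u" and "finite \<Gamma>" "\<Gamma> \<subseteq> lat d" "A \<subseteq> \<Gamma>"
  shows "Hen d J \<Gamma> (\<lambda>i. if i \<in> A then - u i else u i) - Hen d J \<Gamma> u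
     = 4 * infsum (\<lambda>(i,j). J i j * u i * u j) (A \<times> (lat d - A))"
proof -
  define v where "v i = (if i \<in> A then - u i else u i)" for i
  define D where "D = lat d \<times> lat d - (lat d - \<Gamma>) \<times> (lat d - \<Gamma>)"
  define f where "f w = (\<lambda>(i,j). J i j * (1 - w i * w j))" for w :: "(nat \<Rightarrow> int) \<Rightarrow> real"
  define g where "g = (\<lambda>(i,j). 2 * (J i j * u i * u j))"
  have D: "D \<subseteq> \<Gamma> \<times> lat d \<union> lat d \<times> \<Gamma>" by (auto simp: D_def)
  have "config d v" using u by (auto simp: config_def v_def)
  then have "Hen d J \<Gamma> v - Hen d J \<Gamma> u = infsum (\<lambda>p. f v p - f u p) D"
    unfolding Hen_def D_def[symmetric] f_def
    using assms D by (intro infsum_diff[symmetric] summable_bond_energy) auto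
  also have "\<dots> = infsum g (A \<times> (lat d - A) \<union> (lat d - A) \<times> A)"
  proof (rule infsum_cong_neutral)
    fix p assume "p \<in> D - (A \<times> (lat d - A) \<union> (lat d - A) \<times> A)"
    then show "f v p - f u p = 0" by (cases p) (auto simp: D_def f_def v_def)
  next
    fix p assume "p \<in> D \<inter> (A \<times> (lat d - A) \<union> (lat d - A) \<times> A)"
    then show "f v p - f u p = g p" by (cases p) (auto simp: f_def g_def v_def algebra_simps)
  qed (use assms in \<open>auto simp: D_def\<close>)
  also have "\<dots> = 2 * infsum g (A \<times> (lat d - A))"
  proof (rule infsum_Times_Un_swap)
    have "(\<lambda>(i,j). J i j * u i * u j) summable_on A \<times> (lat d - A)"
      using assms by (intro summable_bond_sign) auto
    then show "g summable_on A \<times> (lat d - A)"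
      unfolding g_def by (simp add: summable_on_cmult_right case_prod_unfold)
  qed (use assms in \<open>auto simp: g_def J_sym\<close>)
  also have "infsum g (A \<times> (lat d - A)) = 2 * infsum (\<lambda>(i,j). J i j * u i * u j) (A \<times> (lat d - A))"
    unfolding g_def by (simp add: infsum_cmult_right' case_prod_unfold)
  finally show ?thesis by (simp add: v_def)
qed

lemma minimizer_cut_nonneg:
  assumes "minimizer d J \<Gamma> u" "finite \<Gamma>" "\<Gamma> \<subseteq> lat d" "A \<subseteq> \<Gamma>"
  shows "0 \<le> infsum (\<lambda>(i,j). J i j * u i * u j) (A \<times> (lat d - A))"
proof -
  have u: "config d u" using assms(1) by (simp add: minimizer_def)
  then have "config d (\<lambda>i. if i \<in> A then - u i else u i)" by (auto simp: config_def)
  moreover have "\<forall>i\<in>lat d - \<Gamma>. (if i \<in> A then - u i else u i) = u i" using assms(4) by auto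
  ultimately have "Hen d J \<Gamma> u \<le> Hen d J \<Gamma> (\<lambda>i. if i \<in> A then - u i else u i)"
    using assms(1) unfolding minimizer_def by blast
  then show ?thesis using Hen_flip[OF u assms(2-4)] by linarith
qed

lemma cut_le_twice_aligned_cut:
  assumes u: "config d u" and A: "finite A" "A \<subseteq> lat d"
    and nonneg: "0 \<le> infsum (\<lambda>(i,j). J i j * u i * u j) (A \<times> (lat d - A))"
  shows "infsum (\<lambda>(i,j). J i j) (A \<times> (lat d - A))
     \<le> 2 * infsum (\<lambda>(i,j). J i j) {p \<in> A \<times> (lat d - A). u (fst p) = u (snd p)}"
proof -
  define P where "P = A \<times> (lat d - A)"
  define Pa where "Pa = {p \<in> P. u (fst p) = u (snd p)}"
  define Pd where "Pd = {p \<in> P. u (fst p) \<noteq> u (snd p)}"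
  have P: "P = Pa \<union> Pd" "Pa \<inter> Pd = {}" by (auto simp: Pa_def Pd_def)
  have sub: "Pa \<subseteq> A \<times> lat d" "Pd \<subseteq> A \<times> lat d" by (auto simp: P_def Pa_def Pd_def)
  have J: "(\<lambda>(i,j). J i j) summable_on Q" if "Q \<subseteq> A \<times> lat d" for Q
    using summable_J_Times_lat[OF A] that by (rule summable_on_subset)
  have S: "(\<lambda>(i,j). J i j * u i * u j) summable_on Q" if "Q \<subseteq> A \<times> lat d" for Q
    using u A that by (intro summable_bond_sign) auto
  have prod: "u i * u j = (if u i = u j then 1 else -1)" if "i \<in> lat d" "j \<in> lat d" for i j
    using config_cases[OF u that(1)] config_cases[OF u that(2)] by auto
  have "infsum (\<lambda>(i,j). J i j * u i * u j) P
      = infsum (\<lambda>(i,j). J i j * u i * u j) Pa + infsum (\<lambda>(i,j). J i j * u i * u j) Pd"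
    unfolding P(1) using S[OF sub(1)] S[OF sub(2)] P(2) by (rule infsum_Un_disjoint)
  also have "infsum (\<lambda>(i,j). J i j * u i * u j) Pa = infsum (\<lambda>(i,j). J i j) Pa"
    by (rule infsum_cong) (use A in \<open>auto simp: Pa_def P_def prod mult.assoc\<close>)
  also have "infsum (\<lambda>(i,j). J i j * u i * u j) Pd = infsum (\<lambda>p. - (case p of (i,j) \<Rightarrow> J i j)) Pd"
    by (rule infsum_cong) (use A in \<open>auto simp: Pd_def P_def prod mult.assoc\<close>)
  finally have "infsum (\<lambda>(i,j). J i j * u i * u j) P
      = infsum (\<lambda>(i,j). J i j) Pa - infsum (\<lambda>(i,j). J i j) Pd"
    by (simp add: infsum_uminus)
  moreover have "infsum (\<lambda>(i,j). J i j) P = infsum (\<lambda>(i,j). J i j) Pa + infsum (\<lambda>(i,j). J i j) Pd"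
    unfolding P(1) using J[OF sub(1)] J[OF sub(2)] P(2) by (rule infsum_Un_disjoint)
  ultimately show ?thesis using nonneg by (simp add: P_def Pa_def)
qed

text \<open>An aligned bond leaving a phase set must leave the cube.\<close>

lemma minimizer_phase_cut_le:
  assumes "minimizer d J (cube d l q) u" "r \<le> l"
  shows "infsum (\<lambda>(i,j). J i j) (phase d u \<sigma> q r \<times> (lat d - phase d u \<sigma> q r))
     \<le> 2 * infsum (\<lambda>(i,j). J i j) (phase d u \<sigma> q r \<times> (lat d - cube d r q))"
proof -
  define A where "A = phase d u \<sigma> q r"
  have A: "finite A" "A \<subseteq> lat d" "A \<subseteq> cube d l q"
    using finite_phase phase_subset_lat phase_subset_cube[of d u \<sigma> q r] cube_mono[OF assms(2), of d q]
    by (auto simp: A_def)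
  have "infsum (\<lambda>(i,j). J i j) (A \<times> (lat d - A))
     \<le> 2 * infsum (\<lambda>(i,j). J i j) {p \<in> A \<times> (lat d - A). u (fst p) = u (snd p)}"
    using assms(1) A(1,2) minimizer_cut_nonneg[OF assms(1) finite_cube cube_subset_lat A(3)]
    by (intro cut_le_twice_aligned_cut) (auto simp: minimizer_def)
  also have "infsum (\<lambda>(i,j). J i j) {p \<in> A \<times> (lat d - A). u (fst p) = u (snd p)}
      \<le> infsum (\<lambda>(i,j). J i j) (A \<times> (lat d - cube d r q))"
    using A by (intro infsum_mono2 summable_on_subset[OF summable_J_Times_lat])
      (auto simp: A_def phase_def J_nonneg)
  finally show ?thesis by (simp add: A_def)
qed

subsection \<open>Fractional isoperimetry\<close>

lemma card_mul_le_sum_J: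
  assumes "x \<in> lat d" "B \<subseteq> cube d R x - {x}"
  shows "real (card B) * (lam * (real d * real R) powr (-(real d + s))) \<le> (\<Sum>y\<in>B. J x y)"
proof (rule sum_bounded_below)
  fix y assume "y \<in> B"
  then have y: "y \<in> lat d" "y \<noteq> x" "y \<in> cube d R x" using assms by (auto dest: lat_of_mem_cube)
  have "1 \<le> norm1 d (x - y)" using norm1_ge_1[OF assms(1) y(1)] y(2) by auto
  moreover have "real_of_int (norm1 d (x - y)) \<le> real d * real R"
    using norm1_le_of_mem_cube[OF y(3)] of_int_le_iff[of "norm1 d (x - y)" "int d * int R"] by simp
  ultimately have "(real d * real R) powr (-(real d + s)) \<le> power_kernel d s x y"
    unfolding power_kernel_def using s_pos by (intro powr_mono2') auto
  then have "lam * (real d * real R) powr (-(real d + s)) \<le> lam * power_kernel d s x y"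
    using lam_pos by simp
  also have "\<dots> \<le> J x y" using power_kernel_le_J assms(1) y by auto
  finally show "lam * (real d * real R) powr (-(real d + s)) \<le> J x y" .
qed

text \<open>If \<open>A\<close> fills at most half of \<open>Q_R(x)\<close>, then \<open>R^d/2\<close> sites of \<open>Q_R(x)\<close> outside \<open>A\<close> each
  interact with \<open>x\<close> with strength at least \<open>lam (dR)^(-d-s)\<close>.\<close>

lemma sum_J_escape_ge:
  assumes "finite A" "A \<subseteq> lat d" "x \<in> A" "1 \<le> R" "2 * real (card A) \<le> real R ^ d"
  shows "lam / 2 * real d powr (-(real d + s)) * real R powr (-s) \<le> (\<Sum>y\<in>cube d R x - A. J x y)"
proof -
  define w where "w = lam * (real d * real R) powr (-(real d + s))"
  have "real (card (cube d R x)) - real (card A) \<le> real (card (cube d R x - A))"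
    using diff_card_le_card_Diff[OF assms(1), of "cube d R x"] by linarith
  moreover have "real R ^ d \<le> real (card (cube d R x))"
    unfolding card_cube by (simp add: power_mono)
  ultimately have "real R ^ d / 2 \<le> real (card (cube d R x - A))" using assms(5) by linarith
  then have "real R ^ d / 2 * w \<le> real (card (cube d R x - A)) * w"
    using lam_pos by (intro mult_right_mono) (auto simp: w_def)
  also have "\<dots> \<le> (\<Sum>y\<in>cube d R x - A. J x y)"
    unfolding w_def using assms by (intro card_mul_le_sum_J) auto
  also have "real R ^ d / 2 * w = lam / 2 * real d powr (-(real d + s)) * real R powr (-s)"
  proof -
    have "real R ^ d * real R powr (-(real d + s)) = real R powr (-s)"
      using assms(4) by (simp add: powr_realpow[symmetric] powr_add[symmetric])
    then show ?thesis by (simp add: w_def powr_mult mult_ac)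
  qed
  finally show ?thesis .
qed

lemma fractional_isoperimetry:
  assumes "finite A" "A \<subseteq> lat d"
  shows "iso_const d s lam * real (card A) powr (1 - s / real d)
     \<le> infsum (\<lambda>(i,j). J i j) (A \<times> (lat d - A))"
proof (cases "A = {}")
  case True
  then show ?thesis by (simp add: infsum_nonneg)
next
  case False
  define n where "n = card A"
  have n: "1 \<le> n" using False assms by (simp add: n_def Suc_le_eq card_gt_0_iff)
  obtain R where R: "1 \<le> R" "2 * real n \<le> real R ^ d" "real R \<le> 2 * (2 * real n) powr (1 / real d)"
    using exists_radius_power_ge[OF n d_ge_1] by blast
  have "iso_const d s lam * real n powr (- s / real d)
      = lam / 2 * real d powr (-(real d + s)) * (2 * (2 * real n) powr (1 / real d)) powr (-s)"
    by (simp add: iso_const_def powr_mult powr_powr mult_ac)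
  also have "\<dots> \<le> lam / 2 * real d powr (-(real d + s)) * real R powr (-s)"
    using R lam_pos s_pos n by (intro mult_left_mono powr_mono2') auto
  finally have const_le: "iso_const d s lam * real n powr (- s / real d)
      \<le> lam / 2 * real d powr (-(real d + s)) * real R powr (-s)" .
  have per_point: "iso_const d s lam * real n powr (- s / real d) \<le> (\<Sum>y\<in>cube d R x - A. J x y)"
    if "x \<in> A" for x
    using order_trans[OF const_le sum_J_escape_ge[OF assms that R(1)]] R(2) by (simp add: n_def)
  define B where "B = Sigma A (\<lambda>x. cube d R x - A)"
  have "iso_const d s lam * real n powr (1 - s / real d)
      = real n * (iso_const d s lam * real n powr (- s / real d))"
    using n by (simp add: powr_diff powr_minus_divide)
  also have "\<dots> \<le> (\<Sum>x\<in>A. \<Sum>y\<in>cube d R x - A. J x y)"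
    using sum_bounded_below[of A _ "\<lambda>x. \<Sum>y\<in>cube d R x - A. J x y"] per_point by (simp add: n_def)
  also have "\<dots> = (\<Sum>(i,j)\<in>B. J i j)"
    unfolding B_def using assms by (intro sum.Sigma) (auto simp: finite_cube)
  also have "\<dots> \<le> infsum (\<lambda>(i,j). J i j) (A \<times> (lat d - A))"
    using assms
    by (intro finite_sum_le_infsum summable_J_Times_lat[THEN summable_on_subset])
      (auto simp: B_def finite_cube J_nonneg dest: lat_of_mem_cube)
  finally show ?thesis by (simp add: n_def)
qed

subsection \<open>Volume growth of the phases\<close>

lemma sum_J_exterior_le:
  assumes "x \<in> lat d" "linf_dist d x q \<le> r" "finite G" "G \<subseteq> lat d - cube d r q"
  shows "(\<Sum>y\<in>G. J x y) \<le> Lam * tail_const d s * real (r - linf_dist d x q + 1) powr (-s)"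
proof (rule sum_J_far_le[OF assms(1) _ assms(3)])
  have "x \<in> cube d (linf_dist d x q) q" using mem_cube_iff_linf_dist[OF d_ge_1] assms(1) by simp
  then have "cube d (r - linf_dist d x q) x \<subseteq> cube d r q"
    using mem_cube_trans assms(2) by fastforce
  then show "G \<subseteq> lat d - cube d (r - linf_dist d x q + 1 - 1) x" using assms(4) by auto
qed simp

lemma exterior_interaction_le:
  assumes "finite A" "A \<subseteq> cube d r q"
  shows "infsum (\<lambda>(i,j). J i j) (A \<times> (lat d - cube d r q))
    \<le> (\<Sum>x\<in>A. Lam * tail_const d s * real (r - linf_dist d x q + 1) powr (-s))"
proof (rule infsum_le_finite_sums)
  show "(\<lambda>(i,j). J i j) summable_on (A \<times> (lat d - cube d r q))"
    using assms by (intro summable_J_Times_lat[THEN summable_on_subset]) (auto dest: lat_of_mem_cube)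
  fix F assume F: "finite F" "F \<subseteq> A \<times> (lat d - cube d r q)"
  show "sum (\<lambda>(i,j). J i j) F \<le> (\<Sum>x\<in>A. Lam * tail_const d s * real (r - linf_dist d x q + 1) powr (-s))"
  proof (rule sum_Sigma_le[OF assms(1) F(1)])
    fix x assume "x \<in> A"
    then have "x \<in> lat d" "linf_dist d x q \<le> r"
      using assms mem_cube_iff_linf_dist[OF d_ge_1] by auto
    then show "sum (J x) {y. (x, y) \<in> F} \<le> Lam * tail_const d s * real (r - linf_dist d x q + 1) powr (-s)"
      using F by (intro sum_J_exterior_le finite_fiber) auto
  qed (use F in auto)
qed

lemma phase_eq_Int_linf_dist:
  assumes "r \<le> R"
  shows "phase d u \<sigma> q r = phase d u \<sigma> q R \<inter> {x. linf_dist d x q \<le> r}"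
  using cube_mono[OF assms, of d q] mem_cube_iff_linf_dist[OF d_ge_1]
  by (auto simp: phase_def)

lemma sum_exterior_weights_le:
  "(\<Sum>r\<in>{R'..R}. \<Sum>x\<in>phase d u \<sigma> q r. Lam * tail_const d s * real (r - linf_dist d x q + 1) powr (-s))
     \<le> real (card (phase d u \<sigma> q R)) * (Lam * tail_const d s * (2 / (1 - s) * real (R + 1) powr (1 - s)))"
proof -
  define h where "h r x = Lam * tail_const d s * real (r - linf_dist d x q + 1) powr (-s)" for r x
  define B where "B = phase d u \<sigma> q R"
  have "(\<Sum>r\<in>{R'..R}. \<Sum>x\<in>phase d u \<sigma> q r. h r x)
      = (\<Sum>r\<in>{R'..R}. \<Sum>x\<in>B. if linf_dist d x q \<le> r then h r x else 0)"
  proof (rule sum.cong)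
    fix r assume "r \<in> {R'..R}"
    then have "phase d u \<sigma> q r = B \<inter> {x. linf_dist d x q \<le> r}"
      by (simp add: B_def phase_eq_Int_linf_dist)
    then show "(\<Sum>x\<in>phase d u \<sigma> q r. h r x) = (\<Sum>x\<in>B. if linf_dist d x q \<le> r then h r x else 0)"
      by (simp add: sum.inter_restrict B_def finite_phase)
  qed simp
  also have "\<dots> = (\<Sum>x\<in>B. \<Sum>r\<in>{R'..R}. if linf_dist d x q \<le> r then h r x else 0)"
    by (rule sum.swap)
  also have "\<dots> \<le> (\<Sum>x\<in>B. Lam * tail_const d s * (2 / (1 - s) * real (R + 1) powr (1 - s)))"
  proof (rule sum_mono)
    fix x assume "x \<in> B"
    then have "linf_dist d x q \<le> R"
      using phase_subset_cube mem_cube_iff_linf_dist[OF d_ge_1] by (fastforce simp: B_def)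
    have "(\<Sum>r\<in>{R'..R}. if linf_dist d x q \<le> r then h r x else 0)
        = Lam * tail_const d s * (\<Sum>r\<in>{R'..R}. if linf_dist d x q \<le> r
            then real (r - linf_dist d x q + 1) powr (-s) else 0)"
      by (simp add: h_def sum_distrib_left if_distrib cong: if_cong)
    also have "\<dots> \<le> Lam * tail_const d s * (2 / (1 - s) * real (R + 1) powr (1 - s))"
      using \<open>linf_dist d x q \<le> R\<close> s_pos s_less_1 Lam_pos tail_const_pos[OF d_ge_1 s_pos]
      by (intro mult_left_mono sum_shifted_powr_le) auto
    finally show "(\<Sum>r\<in>{R'..R}. if linf_dist d x q \<le> r then h r x else 0)
        \<le> Lam * tail_const d s * (2 / (1 - s) * real (R + 1) powr (1 - s))" .
  qed
  finally show ?thesis by (simp add: h_def B_def)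
qed

text \<open>Every radius \<open>r \<in> [R, 2R]\<close> gives one instance of the isoperimetric bound against the
  exterior tails; summed over \<open>r\<close>, the tails of each site cost only \<open>R^(1-s)\<close>.\<close>

lemma phase_card_recursion:
  assumes "minimizer d J (cube d l q) u" "1 \<le> R" "2 * R \<le> l"
  shows "real (R + 1) * (iso_const d s lam * real (card (phase d u \<sigma> q R)) powr (1 - s / real d))
     \<le> 2 * (real (card (phase d u \<sigma> q (2 * R)))
          * (Lam * tail_const d s * (2 / (1 - s) * real (2 * R + 1) powr (1 - s))))"
proof -
  define c where "c = iso_const d s lam * real (card (phase d u \<sigma> q R)) powr (1 - s / real d)"
  define h where "h r x = Lam * tail_const d s * real (r - linf_dist d x q + 1) powr (-s)" for r x
  have exponent: "0 \<le> 1 - s / real d"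
    using s_pos s_less_1 d_ge_1 by (simp add: divide_le_eq)
  have layer: "c \<le> 2 * (\<Sum>x\<in>phase d u \<sigma> q r. h r x)" if r: "r \<in> {R..2 * R}" for r
  proof -
    have "card (phase d u \<sigma> q R) \<le> card (phase d u \<sigma> q r)"
      using r by (intro card_mono finite_phase phase_mono) auto
    then have "c \<le> iso_const d s lam * real (card (phase d u \<sigma> q r)) powr (1 - s / real d)"
      unfolding c_def using exponent less_imp_le[OF iso_const_pos[OF d_ge_1 lam_pos]]
      by (intro mult_left_mono powr_mono2) auto
    also have "\<dots> \<le> infsum (\<lambda>(i,j). J i j) (phase d u \<sigma> q r \<times> (lat d - phase d u \<sigma> q r))"
      by (rule fractional_isoperimetry[OF finite_phase phase_subset_lat])
    also have "\<dots> \<le> 2 * infsum (\<lambda>(i,j). J i j) (phase d u \<sigma> q r \<times> (lat d - cube d r q))"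
      using r assms(3) by (intro minimizer_phase_cut_le[OF assms(1)]) auto
    also have "\<dots> \<le> 2 * (\<Sum>x\<in>phase d u \<sigma> q r. h r x)"
      unfolding h_def by (intro mult_left_mono exterior_interaction_le finite_phase phase_subset_cube) auto
    finally show ?thesis .
  qed
  have "real (R + 1) * c = (\<Sum>r\<in>{R..2 * R}. c)" by simp
  also have "\<dots> \<le> (\<Sum>r\<in>{R..2 * R}. 2 * (\<Sum>x\<in>phase d u \<sigma> q r. h r x))"
    using layer by (rule sum_mono)
  also have "\<dots> = 2 * (\<Sum>r\<in>{R..2 * R}. \<Sum>x\<in>phase d u \<sigma> q r. h r x)"
    by (rule sum_distrib_left[symmetric])
  also have "\<dots> \<le> 2 * (real (card (phase d u \<sigma> q (2 * R)))
      * (Lam * tail_const d s * (2 / (1 - s) * real (2 * R + 1) powr (1 - s))))"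
    unfolding h_def by (intro mult_left_mono sum_exterior_weights_le) auto
  finally show ?thesis by (simp add: c_def)
qed

lemma phase_card_growth:
  assumes "minimizer d J (cube d l q) u" "1 \<le> R" "2 * R \<le> l"
  shows "growth_const d s lam Lam * real R powr s * real (card (phase d u \<sigma> q R)) powr (1 - s / real d)
     \<le> real (card (phase d u \<sigma> q (2 * R)))"
proof -
  define V where "V = real (card (phase d u \<sigma> q (2 * R)))"
  define X where "X = iso_const d s lam * real (card (phase d u \<sigma> q R)) powr (1 - s / real d)"
  define L where "L = Lam * tail_const d s"
  define a where "a = 1 - s"
  have a: "0 < a" "a \<le> 1" using s_pos s_less_1 by (auto simp: a_def)
  have L: "0 < L" using Lam_pos tail_const_pos[OF d_ge_1 s_pos] by (simp add: L_def)
  have X: "0 \<le> X"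
    unfolding X_def by (intro mult_nonneg_nonneg less_imp_le[OF iso_const_pos[OF d_ge_1 lam_pos]]) simp
  have R: "1 \<le> real R" using assms(2) by simp
  have "(2 * real R + 1) powr a \<le> (3 * real R) powr a"
    using R a by (intro powr_mono2) auto
  also have "\<dots> \<le> 3 * real R powr a"
    using a powr_mono[of a 1 3] by (simp add: powr_mult mult_right_mono)
  finally have three: "(2 * real R + 1) powr a \<le> 3 * real R powr a" .
  have "real R powr a * (real R powr s * X) = real R * X"
    using R by (simp add: a_def powr_add[symmetric])
  also have "\<dots> \<le> (real R + 1) * X" using X by (simp add: mult_right_mono)
  also have "\<dots> \<le> 4 * V * L / a * (2 * real R + 1) powr a"
    using phase_card_recursion[OF assms, of \<sigma>] by (simp add: V_def X_def L_def a_def add.commute)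
  also have "\<dots> \<le> 4 * V * L / a * (3 * real R powr a)"
    using three L a by (intro mult_left_mono) (auto simp: V_def)
  also have "\<dots> = real R powr a * (12 * V * L / a)" by simp
  finally have "real R powr a * (real R powr s * X) \<le> real R powr a * (12 * V * L / a)" .
  then have "real R powr s * X \<le> 12 * V * L / a"
    using R by (subst (asm) mult_le_cancel_left_pos) auto
  then have "a / (12 * L) * (real R powr s * X) \<le> V"
    using a L by (simp add: field_simps)
  then show ?thesis by (simp add: growth_const_def V_def X_def L_def a_def mult_ac)
qed

lemma card_phase_ge:
  assumes "minimizer d J (cube d l q) u" "1 \<le> card (phase d u \<sigma> q 1)" "1 \<le> l"
  shows "density_const d s (growth_const d s lam Lam) / 2 ^ d * real l ^ d \<le> real (card (phase d u \<sigma> q l))"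
proof (rule volume_growth[where V = "\<lambda>r. real (card (phase d u \<sigma> q r))"])
  show "mono (\<lambda>r. real (card (phase d u \<sigma> q r)))"
    by (auto intro!: monoI card_mono finite_phase phase_mono)
  show "growth_const d s lam Lam * real R powr s * real (card (phase d u \<sigma> q R)) powr (1 - s / real d)
      \<le> real (card (phase d u \<sigma> q (2 * R)))" if "1 \<le> R" "2 * R \<le> l" for R
    using phase_card_growth[OF assms(1) that] .
qed (use assms d_ge_1 s_pos s_less_1 lam_pos lam_le_Lam growth_const_pos in auto)

subsection \<open>Interaction between the phases\<close>

lemma Iint_nonneg:
  assumes "config d u" "\<Gamma> \<subseteq> lat d" "\<Omega> \<subseteq> lat d"
  shows "0 \<le> Iint J \<Gamma> \<Omega> u"
proof -
  have "0 \<le> J i j * (1 - u i * u j)" if "i \<in> lat d" "j \<in> lat d" for i j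
    using J_nonneg[OF that] config_cases[OF assms(1) that(1)] config_cases[OF assms(1) that(2)] by auto
  then show ?thesis using assms unfolding Iint_def by (auto intro!: sum_nonneg)
qed

lemma Iint_ge_card_phases:
  assumes "config d u"
  shows "real (card (phase d u 1 q l)) * real (card (phase d u (-1) q l))
       * (2 * lam * (2 * real d * real l) powr (-(real d + s)))
     \<le> Iint J (cube d l q) (cube d l q) u"
proof -
  define E F Q where "E = phase d u 1 q l" and "F = phase d u (-1) q l" and "Q = cube d l q"
  define w where "w = 2 * lam * (2 * real d * real l) powr (-(real d + s))"
  have sub: "E \<subseteq> Q" "F \<subseteq> Q" "Q \<subseteq> lat d"
    by (auto simp: E_def F_def Q_def phase_def dest: lat_of_mem_cube)
  have nonneg: "0 \<le> J i j * (1 - u i * u j)" if "i \<in> Q" "j \<in> Q" for i j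
    using Iint_nonneg[OF assms, of "{i}" "{j}"] that sub(3) by (auto simp: Iint_def)
  have row: "real (card F) * w \<le> (\<Sum>j\<in>F. J i j * (1 - u i * u j))" if "i \<in> E" for i
  proof -
    have i: "i \<in> lat d" "u i = 1" "F \<subseteq> cube d (2 * l) i - {i}"
      using that sub mem_cube_double by (auto simp: E_def F_def Q_def phase_def)
    then have "real (card F) * (lam * (real d * real (2 * l)) powr (-(real d + s))) \<le> (\<Sum>j\<in>F. J i j)"
      by (intro card_mul_le_sum_J)
    moreover have "(\<Sum>j\<in>F. J i j * (1 - u i * u j)) = 2 * (\<Sum>j\<in>F. J i j)"
      using i by (simp add: F_def phase_def sum_distrib_left mult.commute)
    ultimately show ?thesis by (simp add: w_def mult_ac)
  qed
  have "real (card E) * real (card F) * w \<le> (\<Sum>i\<in>E. \<Sum>j\<in>F. J i j * (1 - u i * u j))"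
    using sum_bounded_below[of E "real (card F) * w"] row by (simp add: mult.assoc)
  also have "\<dots> \<le> (\<Sum>i\<in>E. \<Sum>j\<in>Q. J i j * (1 - u i * u j))"
    using sub nonneg by (intro sum_mono sum_mono2) (auto simp: Q_def finite_cube)
  also have "\<dots> \<le> (\<Sum>i\<in>Q. \<Sum>j\<in>Q. J i j * (1 - u i * u j))"
    using sub nonneg by (intro sum_mono2 sum_nonneg) (auto simp: Q_def finite_cube)
  finally show ?thesis by (simp add: E_def F_def Q_def w_def Iint_def)
qed

lemma energy_lower_bound:
  assumes "minimizer d J (cube d l q) u" "q \<in> bdry d u"
  shows "energy_const d s lam Lam * real l powr (real d - s) \<le> Iint J (cube d l q) (cube d l q) u"
proof (cases "l = 0")
  case True
  then show ?thesis
    using assms Iint_nonneg cube_subset_lat by (simp add: minimizer_def)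
next
  case False
  define a where "a = density_const d s (growth_const d s lam Lam) / 2 ^ d"
  define w where "w = 2 * lam * (2 * real d * real l) powr (-(real d + s))"
  have a: "0 \<le> a" "0 \<le> w"
    using density_growth_const_pos[OF d_ge_1 s_pos s_less_1 lam_pos lam_le_Lam] lam_pos
    by (auto simp: a_def w_def)
  have "a * real l ^ d \<le> real (card (phase d u \<sigma> q l))" if "\<sigma> = 1 \<or> \<sigma> = -1" for \<sigma>
    unfolding a_def using assms False card_phase_1_ge_1[OF assms(2) that]
    by (intro card_phase_ge) auto
  then have "(a * real l ^ d) * (a * real l ^ d) * w
      \<le> real (card (phase d u 1 q l)) * real (card (phase d u (-1) q l)) * w"
    using a by (intro mult_right_mono mult_mono) auto
  also have "\<dots> \<le> Iint J (cube d l q) (cube d l q) u"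
    using assms(1) Iint_ge_card_phases by (simp add: w_def minimizer_def)
  also have "(a * real l ^ d) * (a * real l ^ d) * w = energy_const d s lam Lam * real l powr (real d - s)"
  proof -
    have "real l ^ d * real l ^ d * real l powr (-(real d + s)) = real l powr (real d - s)"
      using False by (simp add: powr_realpow[symmetric] flip: powr_add)
    then show ?thesis
      by (simp add: a_def w_def energy_const_def powr_mult power2_eq_square mult_ac)
  qed
  finally show ?thesis .
qed

end

theorem mainTheorem13:
  fixes d :: nat and s lam Lam :: real
  assumes "d \<ge> 2" and "0 < s" and "s < 1" and "0 < lam" and "lam \<le> Lam"
  shows "\<exists>c>0. \<forall>J u q l.
     J_nonneg d J \<and> J1 d J \<and> J2 d J \<and> J5 d J \<and> JP d s lam Lam J \<and>
     q \<in> lat d \<and> minimizer d J (cube d l q) u \<and> q \<in> bdry d u \<longrightarrow>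
     Iint J (cube d l q) (cube d l q) u \<ge> c * real l powr (real d - s)"
proof (intro exI[of _ "energy_const d s lam Lam"] conjI allI impI)
  show "0 < energy_const d s lam Lam" using assms by (intro energy_const_pos) auto
  fix J u q l
  assume H: "J_nonneg d J \<and> J1 d J \<and> J2 d J \<and> J5 d J \<and> JP d s lam Lam J \<and>
     q \<in> lat d \<and> minimizer d J (cube d l q) u \<and> q \<in> bdry d u"
  then interpret power_law_coupling d s lam Lam J
    using assms by unfold_locales auto
  show "energy_const d s lam Lam * real l powr (real d - s) \<le> Iint J (cube d l q) (cube d l q) u"
    using H by (intro energy_lower_bound) auto
qed

end
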